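(* Let $X_0,X_1,\ldots$ be an irreducible and aperiodic discrete-time Markov chain on a finite state space $\Omega$ with stationary distribution $\pi$. Let $x\in\Omega$ be a state and $\mathcal C\subset\Omega$ a subset such that, for an initial state $x_0\in\Omega$, $$P\{\tau_x<\tau_{\mathcal C}\mid X_0=x_0\}\ge c$$ for some constant $c$. Let $\mathcal B\subset\Omega$ be a subset such that every path from $x$ to $\mathcal C$ intersects $\mathcal B$. Then $$E\{\tau_{\mathcal C}\mid X_0=x_0\}\ge\frac{c\,\pi(x)}{\pi(\mathcal B)}.$$
   Context: For $A\subset\Omega$ (or a single state), $\tau_A=\min\{t\ge0:X_t\in A\}$. A path is a sequence of states in which each consecutive pair has positive transition probability. $\pi(\mathcal B)=\sum_{y\in\mathcal B}\pi(y)$. *)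

theory Defs
  imports "HOL-Probability.Probability"
begin

text \<open>Finite state space: the finite type 'a (Omega = UNIV). Transition matrix P.\<close>

definition stochastic :: "('a::finite \<Rightarrow> 'a \<Rightarrow> real) \<Rightarrow> bool" where
  "stochastic P \<longleftrightarrow> (\<forall>y z. 0 \<le> P y z) \<and> (\<forall>y. (\<Sum>z\<in>UNIV. P y z) = 1)"

fun mpow :: "('a::finite \<Rightarrow> 'a \<Rightarrow> real) \<Rightarrow> nat \<Rightarrow> 'a \<Rightarrow> 'a \<Rightarrow> real" where
  "mpow P 0 y z = (if y = z then 1 else 0)"
| "mpow P (Suc n) y z = (\<Sum>w\<in>UNIV. mpow P n y w * P w z)"

definition irreducible_chain :: "('a::finite \<Rightarrow> 'a \<Rightarrow> real) \<Rightarrow> bool" where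
  "irreducible_chain P \<longleftrightarrow> (\<forall>y z. \<exists>n. 0 < mpow P n y z)"

definition aperiodic_chain :: "('a::finite \<Rightarrow> 'a \<Rightarrow> real) \<Rightarrow> bool" where
  "aperiodic_chain P \<longleftrightarrow> (\<forall>y. Gcd {n. 0 < n \<and> 0 < mpow P n y y} = 1)"

definition stationary_dist :: "('a::finite \<Rightarrow> 'a \<Rightarrow> real) \<Rightarrow> ('a \<Rightarrow> real) \<Rightarrow> bool" where
  "stationary_dist P \<pi> \<longleftrightarrow> (\<forall>y. 0 \<le> \<pi> y) \<and> (\<Sum>y\<in>UNIV. \<pi> y) = 1
     \<and> (\<forall>z. (\<Sum>y\<in>UNIV. \<pi> y * P y z) = \<pi> z)"

definition markov_chain :: "'w measure \<Rightarrow> (nat \<Rightarrow> 'w \<Rightarrow> 'a::finite) \<Rightarrow> ('a \<Rightarrow> 'a \<Rightarrow> real) \<Rightarrow> bool" where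
  "markov_chain M X P \<longleftrightarrow> prob_space M \<and> (\<forall>n. X n \<in> measurable M (count_space UNIV)) \<and>
     (\<forall>n a. measure M {\<omega>\<in>space M. \<forall>i\<le>n. X i \<omega> = a i}
            = measure M {\<omega>\<in>space M. X 0 \<omega> = a 0} * (\<Prod>i<n. P (a i) (a (Suc i))))"

definition hit :: "(nat \<Rightarrow> 'w \<Rightarrow> 'a) \<Rightarrow> 'a set \<Rightarrow> 'w \<Rightarrow> enat" where
  "hit X A \<omega> = (if \<exists>t. X t \<omega> \<in> A then enat (LEAST t. X t \<omega> \<in> A) else \<infinity>)"

definition cond_prob_start :: "'w measure \<Rightarrow> (nat \<Rightarrow> 'w \<Rightarrow> 'a) \<Rightarrow> 'a \<Rightarrow> 'w set \<Rightarrow> real" where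
  "cond_prob_start M X x0 E = measure M (E \<inter> {\<omega>\<in>space M. X 0 \<omega> = x0}) / measure M {\<omega>\<in>space M. X 0 \<omega> = x0}"

definition cond_exp_start :: "'w measure \<Rightarrow> (nat \<Rightarrow> 'w \<Rightarrow> 'a) \<Rightarrow> 'a \<Rightarrow> ('w \<Rightarrow> ennreal) \<Rightarrow> ennreal" where
  "cond_exp_start M X x0 f = (\<integral>\<^sup>+\<omega>. f \<omega> * indicator {\<omega>\<in>space M. X 0 \<omega> = x0} \<omega> \<partial>M)
      / emeasure M {\<omega>\<in>space M. X 0 \<omega> = x0}"

definition is_path :: "('a \<Rightarrow> 'a \<Rightarrow> real) \<Rightarrow> 'a list \<Rightarrow> bool" where
  "is_path P xs \<longleftrightarrow> xs \<noteq> [] \<and> (\<forall>i. Suc i < length xs \<longrightarrow> 0 < P (xs ! i) (xs ! Suc i))"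

end

theory Submission
  imports Defs
begin

text \<open>
  Let \<open>h y\<close> be the probability, starting from \<open>y\<close>, of visiting \<open>x\<close> before \<open>C\<close>, and
  \<open>e = 1 - (\<Sum>z. P x z * h z)\<close> the probability of escaping from \<open>x\<close> to \<open>C\<close> before returning
  to \<open>x\<close>. Each excursion from \<open>x\<close> reaches \<open>C\<close> with probability \<open>e\<close> only, so the expected
  hitting time of \<open>C\<close> from \<open>y\<close> is at least \<open>h y / e\<close>. Stationarity bounds \<open>e\<close>: testing the
  invariance of \<open>\<pi>\<close> against \<open>f = 1\<^sub>B + (1 - h) 1\<^sub>R\<close>, where \<open>R\<close> is the set of states reachable
  from \<open>x\<close> without touching \<open>B\<close> (so \<open>R\<close> misses \<open>C\<close>), gives \<open>\<pi> x * e \<le> \<pi>(B)\<close>. Hence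
  \<open>E\<^sub>x\<^sub>0 \<tau>\<^sub>C \<ge> h x0 * \<pi> x / \<pi>(B) \<ge> c * \<pi> x / \<pi>(B)\<close>. All probabilities involved concern
  finitely many steps, where they are sums of path weights; \<open>h\<close> is the limit of such sums.
\<close>

fun path_weight :: "('a \<Rightarrow> 'a \<Rightarrow> real) \<Rightarrow> 'a list \<Rightarrow> real" where
  "path_weight P [] = 1"
| "path_weight P [y] = 1"
| "path_weight P (y # z # ys) = P y z * path_weight P (z # ys)"

lemma path_weight_eq_prod:
  "path_weight P xs = (\<Prod>i<length xs - 1. P (xs ! i) (xs ! Suc i))"
  by (induction P xs rule: path_weight.induct)
    (simp_all add: prod.lessThan_Suc_shift del: prod.lessThan_Suc)

definition trajectories :: "nat \<Rightarrow> 'a \<Rightarrow> 'a list set" where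
  "trajectories n y = {xs. length xs = Suc n \<and> hd xs = y}"

definition trajectory_prob ::
    "('a \<Rightarrow> 'a \<Rightarrow> real) \<Rightarrow> nat \<Rightarrow> 'a \<Rightarrow> ('a list \<Rightarrow> bool) \<Rightarrow> real" where
  "trajectory_prob P n y Q = (\<Sum>xs\<in>trajectories n y. if Q xs then path_weight P xs else 0)"

lemma finite_trajectories: "finite (trajectories n (y::'a::finite))"
proof -
  have "trajectories n y \<subseteq> {xs. set xs \<subseteq> UNIV \<and> length xs = Suc n}"
    by (auto simp: trajectories_def)
  then show ?thesis
    using finite_lists_length_eq[of "UNIV::'a set"] by (rule finite_subset) simp
qed

lemma trajectories_0: "trajectories 0 y = {[y]}"
  by (auto simp: trajectories_def length_Suc_conv)

lemma trajectories_Suc: "trajectories (Suc n) y = (\<lambda>ys. y # ys) ` (\<Union>z. trajectories n z)"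
  by (auto simp: trajectories_def length_Suc_conv image_iff)

lemma path_weight_Cons_trajectory:
  "ys \<in> trajectories n z \<Longrightarrow> path_weight P (y # ys) = P y z * path_weight P ys"
  by (cases ys) (auto simp: trajectories_def)

lemma trajectory_prob_0: "trajectory_prob P 0 y Q = (if Q [y] then 1 else 0)"
  by (simp add: trajectory_prob_def trajectories_0)

lemma trajectory_prob_Suc:
  fixes P :: "'a::finite \<Rightarrow> 'a \<Rightarrow> real"
  shows "trajectory_prob P (Suc n) y Q = (\<Sum>z\<in>UNIV. P y z * trajectory_prob P n z (\<lambda>ys. Q (y # ys)))"
proof -
  let ?f = "\<lambda>xs. if Q xs then path_weight P xs else 0"
  have "trajectory_prob P (Suc n) y Q = (\<Sum>ys\<in>(\<Union>z. trajectories n z). ?f (y # ys))"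
    unfolding trajectory_prob_def trajectories_Suc by (subst sum.reindex) (auto simp: inj_on_def)
  also have "\<dots> = (\<Sum>z\<in>UNIV. \<Sum>ys\<in>trajectories n z. ?f (y # ys))"
    by (rule sum.UNION_disjoint) (simp_all add: finite_trajectories, auto simp: trajectories_def)
  also have "\<dots> = (\<Sum>z\<in>UNIV. P y z * trajectory_prob P n z (\<lambda>ys. Q (y # ys)))"
    unfolding trajectory_prob_def sum_distrib_left
    by (intro sum.cong refl) (simp add: path_weight_Cons_trajectory)
  finally show ?thesis .
qed

lemma trajectory_prob_True:
  assumes "stochastic P"
  shows "trajectory_prob P n (y::'a::finite) (\<lambda>_. True) = 1"
  using assms
  by (induction n arbitrary: y) (simp_all add: trajectory_prob_0 trajectory_prob_Suc stochastic_def)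

lemma path_weight_nonneg: "stochastic P \<Longrightarrow> 0 \<le> path_weight P xs"
  by (induction P xs rule: path_weight.induct) (simp_all add: stochastic_def)

lemma trajectory_prob_nonneg: "stochastic P \<Longrightarrow> 0 \<le> trajectory_prob P n y Q"
  unfolding trajectory_prob_def by (intro sum_nonneg) (simp add: path_weight_nonneg)

lemma trajectory_prob_le_1:
  assumes "stochastic P"
  shows "trajectory_prob P n (y::'a::finite) Q \<le> 1"
proof -
  have "trajectory_prob P n y Q \<le> trajectory_prob P n y (\<lambda>_. True)"
    unfolding trajectory_prob_def using assms by (intro sum_mono) (simp add: path_weight_nonneg)
  then show ?thesis using trajectory_prob_True[OF assms] by simp
qed

lemma trajectory_prob_False: "trajectory_prob P n y (\<lambda>_. False) = 0"
  by (simp add: trajectory_prob_def)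

fun reaches_before :: "'a \<Rightarrow> 'a set \<Rightarrow> 'a list \<Rightarrow> bool" where
  "reaches_before x C [] = False"
| "reaches_before x C (y # ys) \<longleftrightarrow> y \<notin> C \<and> (y = x \<or> reaches_before x C ys)"

lemma reaches_before_iff_nth:
  "reaches_before x C xs \<longleftrightarrow> (\<exists>k<length xs. xs ! k = x \<and> (\<forall>i\<le>k. xs ! i \<notin> C))"
proof (induction xs)
  case (Cons y ys)
  have "(\<exists>k<length (y # ys). (y # ys) ! k = x \<and> (\<forall>i\<le>k. (y # ys) ! i \<notin> C))
      \<longleftrightarrow> y \<notin> C \<and> (y = x \<or> (\<exists>k<length ys. ys ! k = x \<and> (\<forall>i\<le>k. ys ! i \<notin> C)))"
    unfolding less_Suc_eq_le[symmetric] by (auto simp: Ex_less_Suc2 All_less_Suc2)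
  then show ?case using Cons by simp
qed simp

fun hit_before_within :: "('a::finite \<Rightarrow> 'a \<Rightarrow> real) \<Rightarrow> 'a \<Rightarrow> 'a set \<Rightarrow> nat \<Rightarrow> 'a \<Rightarrow> real" where
  "hit_before_within P x C 0 y = (if y = x then 1 else 0)"
| "hit_before_within P x C (Suc n) y =
    (if y = x then 1 else if y \<in> C then 0 else (\<Sum>z\<in>UNIV. P y z * hit_before_within P x C n z))"

fun avoid_within :: "('a::finite \<Rightarrow> 'a \<Rightarrow> real) \<Rightarrow> 'a set \<Rightarrow> nat \<Rightarrow> 'a \<Rightarrow> real" where
  "avoid_within P C 0 y = (if y \<in> C then 0 else 1)"
| "avoid_within P C (Suc n) y = (if y \<in> C then 0 else (\<Sum>z\<in>UNIV. P y z * avoid_within P C n z))"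

lemma hit_before_within_eq_trajectory_prob:
  assumes "stochastic P" "x \<notin> C"
  shows "hit_before_within P x C n y = trajectory_prob P n y (reaches_before x C)"
proof (induction n arbitrary: y)
  case 0
  show ?case using assms(2) by (simp add: trajectory_prob_0)
next
  case (Suc n)
  then show ?case
    using assms trajectory_prob_True[OF assms(1)]
    by (simp add: trajectory_prob_Suc stochastic_def trajectory_prob_False)
qed

lemma avoid_within_eq_trajectory_prob:
  "avoid_within P C n y = trajectory_prob P n y (\<lambda>xs. set xs \<inter> C = {})"
  by (induction n arbitrary: y) (simp_all add: trajectory_prob_0 trajectory_prob_Suc trajectory_prob_False)

lemma avoid_within_nonneg: "stochastic P \<Longrightarrow> 0 \<le> avoid_within P C n y"
  by (simp add: avoid_within_eq_trajectory_prob trajectory_prob_nonneg)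

lemma hit_before_within_Suc_mono:
  assumes "stochastic P"
  shows "hit_before_within P x C n y \<le> hit_before_within P x C (Suc n) y"
proof (induction n arbitrary: y)
  case 0
  show ?case using assms by (auto simp: stochastic_def intro!: sum_nonneg)
next
  case (Suc n)
  have "(\<Sum>z\<in>UNIV. P y z * hit_before_within P x C n z)
      \<le> (\<Sum>z\<in>UNIV. P y z * hit_before_within P x C (Suc n) z)"
    using assms by (intro sum_mono mult_left_mono Suc.IH) (simp add: stochastic_def)
  then show ?case by (simp only: hit_before_within.simps) auto
qed

definition hit_before :: "('a::finite \<Rightarrow> 'a \<Rightarrow> real) \<Rightarrow> 'a \<Rightarrow> 'a set \<Rightarrow> 'a \<Rightarrow> real" where
  "hit_before P x C y = lim (\<lambda>n. hit_before_within P x C n y)"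

context
  fixes P :: "'a::finite \<Rightarrow> 'a \<Rightarrow> real" and x :: 'a and C :: "'a set"
  assumes stochastic: "stochastic P" and x_notin: "x \<notin> C"
begin

lemma hit_before_within_bounds:
  "0 \<le> hit_before_within P x C n y" "hit_before_within P x C n y \<le> 1"
  using trajectory_prob_nonneg[OF stochastic] trajectory_prob_le_1[OF stochastic]
  by (simp_all add: hit_before_within_eq_trajectory_prob[OF stochastic x_notin])

lemma LIMSEQ_hit_before: "(\<lambda>n. hit_before_within P x C n y) \<longlonglongrightarrow> hit_before P x C y"
  and hit_before_within_le: "hit_before_within P x C n y \<le> hit_before P x C y"
proof -
  have "incseq (\<lambda>n. hit_before_within P x C n y)"
    using hit_before_within_Suc_mono[OF stochastic] by (simp add: incseq_Suc_iff)
  moreover have "\<forall>n. hit_before_within P x C n y \<le> 1"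
    using hit_before_within_bounds(2) by blast
  ultimately obtain L where L: "(\<lambda>n. hit_before_within P x C n y) \<longlonglongrightarrow> L"
    and le_L: "\<forall>n. hit_before_within P x C n y \<le> L"
    by (rule incseq_convergent)
  moreover have "hit_before P x C y = L"
    unfolding hit_before_def using L by (rule limI)
  ultimately show "(\<lambda>n. hit_before_within P x C n y) \<longlonglongrightarrow> hit_before P x C y"
    and "hit_before_within P x C n y \<le> hit_before P x C y" by simp_all
qed

lemma hit_before_self: "hit_before P x C x = 1"
proof -
  have "(\<lambda>n. hit_before_within P x C n x) = (\<lambda>n. 1)"
    by (rule ext, case_tac n) auto
  then show ?thesis by (simp add: hit_before_def)
qed

lemma hit_before_in: "y \<in> C \<Longrightarrow> hit_before P x C y = 0"
proof -
  assume "y \<in> C"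
  then have "(\<lambda>n. hit_before_within P x C n y) = (\<lambda>n. 0)"
    using x_notin by (intro ext, case_tac n) auto
  then show ?thesis by (simp add: hit_before_def)
qed

lemma hit_before_nonneg: "0 \<le> hit_before P x C y"
  by (rule LIMSEQ_le_const[OF LIMSEQ_hit_before]) (simp add: hit_before_within_bounds)

lemma hit_before_le_1: "hit_before P x C y \<le> 1"
  by (rule LIMSEQ_le_const2[OF LIMSEQ_hit_before]) (simp add: hit_before_within_bounds)

lemma hit_before_harmonic:
  assumes "y \<noteq> x" "y \<notin> C"
  shows "hit_before P x C y = (\<Sum>z\<in>UNIV. P y z * hit_before P x C z)"
proof -
  have "(\<lambda>n. \<Sum>z\<in>UNIV. P y z * hit_before_within P x C n z)
      \<longlonglongrightarrow> (\<Sum>z\<in>UNIV. P y z * hit_before P x C z)"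
    by (intro tendsto_intros LIMSEQ_hit_before)
  then have "(\<lambda>n. hit_before_within P x C (Suc n) y) \<longlonglongrightarrow> (\<Sum>z\<in>UNIV. P y z * hit_before P x C z)"
    using assms by simp
  then show ?thesis by (rule LIMSEQ_unique[OF LIMSEQ_Suc[OF LIMSEQ_hit_before]])
qed

end

lemma stationary_sum_drift:
  fixes \<pi> :: "'a::finite \<Rightarrow> real"
  assumes "stationary_dist P \<pi>"
  shows "(\<Sum>y\<in>UNIV. \<pi> y * ((\<Sum>z\<in>UNIV. P y z * f z) - f y)) = 0"
proof -
  have "(\<Sum>y\<in>UNIV. \<pi> y * (\<Sum>z\<in>UNIV. P y z * f z)) = (\<Sum>z\<in>UNIV. (\<Sum>y\<in>UNIV. \<pi> y * P y z) * f z)"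
    unfolding sum_distrib_left sum_distrib_right by (subst sum.swap) (simp add: mult.assoc)
  also have "\<dots> = (\<Sum>z\<in>UNIV. \<pi> z * f z)"
    using assms by (simp add: stationary_dist_def)
  finally show ?thesis by (simp add: right_diff_distrib sum_subtractf)
qed

lemma is_path_snoc:
  assumes "is_path P xs" "0 < P (last xs) z"
  shows "is_path P (xs @ [z])"
  using assms unfolding is_path_def
  by (auto simp: nth_append last_conv_nth less_Suc_eq) (metis diff_Suc_Suc diff_zero)

definition reachable_avoiding :: "('a \<Rightarrow> 'a \<Rightarrow> real) \<Rightarrow> 'a set \<Rightarrow> 'a \<Rightarrow> 'a set" where
  "reachable_avoiding P B x = {z. \<exists>xs. is_path P xs \<and> hd xs = x \<and> last xs = z \<and> set xs \<inter> B = {}}"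

lemma start_reachable_avoiding: "x \<notin> B \<Longrightarrow> x \<in> reachable_avoiding P B x"
  unfolding reachable_avoiding_def by (intro CollectI exI[of _ "[x]"]) (simp add: is_path_def)

lemma reachable_avoiding_disjoint: "z \<in> reachable_avoiding P B x \<Longrightarrow> z \<notin> B"
  unfolding reachable_avoiding_def by (auto dest: last_in_set simp: is_path_def)

lemma reachable_avoiding_step:
  assumes "y \<in> reachable_avoiding P B x" "0 < P y z" "z \<notin> B"
  shows "z \<in> reachable_avoiding P B x"
proof -
  obtain xs where xs: "is_path P xs" "hd xs = x" "last xs = y" "set xs \<inter> B = {}"
    using assms(1) unfolding reachable_avoiding_def by blast
  then have "xs \<noteq> []" by (simp add: is_path_def)
  with xs assms(2,3) show ?thesis
    unfolding reachable_avoiding_def by (intro CollectI exI[of _ "xs @ [z]"]) (auto intro: is_path_snoc)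
qed

definition escape_test :: "('a \<Rightarrow> 'a \<Rightarrow> real) \<Rightarrow> 'a set \<Rightarrow> 'a \<Rightarrow> ('a \<Rightarrow> real) \<Rightarrow> 'a \<Rightarrow> real" where
  "escape_test P B x h z =
    (if z \<in> B then 1 else if z \<in> reachable_avoiding P B x then 1 - h z else 0)"

lemma escape_test_nonneg: "(\<And>z. h z \<le> 1) \<Longrightarrow> 0 \<le> escape_test P B x h z"
  by (simp add: escape_test_def)

lemma escape_test_step:
  fixes h :: "'a::finite \<Rightarrow> real"
  assumes stochastic: "stochastic P" and h_nonneg: "\<And>z. 0 \<le> h z"
    and reachable: "y \<in> reachable_avoiding P B x"
  shows "1 - (\<Sum>z\<in>UNIV. P y z * h z) \<le> (\<Sum>z\<in>UNIV. P y z * escape_test P B x h z)"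
proof -
  have P_nonneg: "0 \<le> P y z" for z
    using stochastic by (simp add: stochastic_def)
  \<comment> \<open>Every successor of \<open>y\<close> lies in \<open>B\<close> or is again reachable, and there the test function
    dominates \<open>1 - h\<close>.\<close>
  have "P y z * (1 - h z) \<le> P y z * escape_test P B x h z" for z
  proof (cases "P y z = 0")
    case False
    then have "z \<in> reachable_avoiding P B x \<or> z \<in> B"
      using P_nonneg[of z] reachable_avoiding_step[OF reachable] by fastforce
    then show ?thesis
      using P_nonneg[of z] h_nonneg[of z] by (auto simp: escape_test_def mult_left_le)
  qed simp
  then have "(\<Sum>z\<in>UNIV. P y z * (1 - h z)) \<le> (\<Sum>z\<in>UNIV. P y z * escape_test P B x h z)"
    by (rule sum_mono)
  then show ?thesis
    using stochastic by (simp add: right_diff_distrib sum_subtractf stochastic_def)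
qed

lemma escape_test_drift:
  fixes h :: "'a::finite \<Rightarrow> real"
  assumes stochastic: "stochastic P"
    and paths: "\<forall>xs. is_path P xs \<and> hd xs = x \<and> last xs \<in> C \<longrightarrow> set xs \<inter> B \<noteq> {}"
    and h_x: "h x = 1" and h_nonneg: "\<And>y. 0 \<le> h y" and h_le_1: "\<And>y. h y \<le> 1"
    and harmonic: "\<And>y. y \<noteq> x \<Longrightarrow> y \<notin> C \<Longrightarrow> h y = (\<Sum>z\<in>UNIV. P y z * h z)"
    and x_notin_B: "x \<notin> B"
  shows "(if y = x then 1 - (\<Sum>z\<in>UNIV. P x z * h z) else 0) - (if y \<in> B then 1 else 0)
    \<le> (\<Sum>z\<in>UNIV. P y z * escape_test P B x h z) - escape_test P B x h y"
proof -
  have Pf_nonneg: "0 \<le> (\<Sum>z\<in>UNIV. P y z * escape_test P B x h z)"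
    using stochastic h_le_1
    by (intro sum_nonneg mult_nonneg_nonneg escape_test_nonneg) (simp_all add: stochastic_def)
  consider "y \<in> reachable_avoiding P B x" | "y \<notin> reachable_avoiding P B x" by blast
  then show ?thesis
  proof cases
    case 1
    then have "y \<notin> B"
      by (rule reachable_avoiding_disjoint)
    have "y \<notin> C"
      using 1 paths unfolding reachable_avoiding_def by blast
    with \<open>y \<notin> C\<close> have "h y - (\<Sum>z\<in>UNIV. P y z * h z) = (if y = x then 1 - (\<Sum>z\<in>UNIV. P x z * h z) else 0)"
      using harmonic h_x by simp
    moreover have "escape_test P B x h y = 1 - h y"
      using 1 \<open>y \<notin> B\<close> by (simp add: escape_test_def)
    ultimately show ?thesis
      using escape_test_step[of P h, OF stochastic h_nonneg 1] \<open>y \<notin> B\<close> by simp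
  next
    case 2
    then show ?thesis
      using x_notin_B start_reachable_avoiding[OF x_notin_B] Pf_nonneg
      by (auto simp: escape_test_def)
  qed
qed

lemma stationary_escape_bound:
  fixes \<pi> h :: "'a::finite \<Rightarrow> real"
  assumes stochastic: "stochastic P" and stationary: "stationary_dist P \<pi>"
    and paths: "\<forall>xs. is_path P xs \<and> hd xs = x \<and> last xs \<in> C \<longrightarrow> set xs \<inter> B \<noteq> {}"
    and h_x: "h x = 1" and h_nonneg: "\<And>y. 0 \<le> h y" and h_le_1: "\<And>y. h y \<le> 1"
    and harmonic: "\<And>y. y \<noteq> x \<Longrightarrow> y \<notin> C \<Longrightarrow> h y = (\<Sum>z\<in>UNIV. P y z * h z)"
  shows "\<pi> x * (1 - (\<Sum>z\<in>UNIV. P x z * h z)) \<le> (\<Sum>y\<in>B. \<pi> y)"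
proof -
  have \<pi>_nonneg: "\<And>y. 0 \<le> \<pi> y"
    using stationary by (auto simp: stationary_dist_def)
  define e where "e = 1 - (\<Sum>z\<in>UNIV. P x z * h z)"
  show ?thesis
  proof (cases "x \<in> B")
    case True
    have "0 \<le> (\<Sum>z\<in>UNIV. P x z * h z)"
      using stochastic h_nonneg by (intro sum_nonneg mult_nonneg_nonneg) (simp_all add: stochastic_def)
    then have "\<pi> x * e \<le> \<pi> x"
      using \<pi>_nonneg[of x] by (simp add: e_def mult_left_le)
    also have "\<dots> \<le> (\<Sum>y\<in>B. \<pi> y)"
      using True by (intro member_le_sum \<pi>_nonneg) auto
    finally show ?thesis by (simp add: e_def)
  next
    case False
    define f where "f = escape_test P B x h"
    define L where "L y = (if y = x then e else 0) - (if y \<in> B then 1 else 0)" for y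
    have "\<pi> y * L y = (if y = x then \<pi> x * e else 0) - (if y \<in> B then \<pi> y else 0)" for y
      by (simp add: L_def right_diff_distrib)
    then have "\<pi> x * e - (\<Sum>y\<in>B. \<pi> y) = (\<Sum>y\<in>UNIV. \<pi> y * L y)"
      using sum.inter_restrict[of UNIV \<pi> B] by (simp add: sum_subtractf)
    also have "\<dots> \<le> (\<Sum>y\<in>UNIV. \<pi> y * ((\<Sum>z\<in>UNIV. P y z * f z) - f y))"
      unfolding L_def e_def f_def
      by (intro sum_mono mult_left_mono \<pi>_nonneg escape_test_drift[OF stochastic paths h_x h_nonneg h_le_1 harmonic False])
    also have "\<dots> = 0"
      by (rule stationary_sum_drift[OF stationary])
    finally show ?thesis by (simp add: e_def)
  qed
qed

lemma avoid_within_in: "y \<in> C \<Longrightarrow> avoid_within P C n y = 0"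
  by (cases n) simp_all

text \<open>
  As \<open>\<Sum>t<n. avoid_within P C t y\<close> is the expectation of \<open>min \<tau>\<^sub>C n\<close> started at \<open>y\<close>, this is a
  comparison principle for the equation \<open>T = 1 + P T\<close> off \<open>C\<close> solved by the expected hitting time.
\<close>

lemma le_sum_avoid_within:
  fixes u :: "'a::finite \<Rightarrow> real"
  assumes stochastic: "stochastic P"
    and u_le: "\<And>y. u y \<le> G" and u_in: "\<And>y. y \<in> C \<Longrightarrow> u y \<le> 0"
    and u_sub: "\<And>y. y \<notin> C \<Longrightarrow> u y \<le> 1 + (\<Sum>z\<in>UNIV. P y z * u z)"
  shows "u y \<le> (\<Sum>t<n. avoid_within P C t y) + G * avoid_within P C n y"
proof (induction n arbitrary: y)
  case 0
  show ?case using u_le[of y] u_in[of y] by simp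
next
  case (Suc n)
  show ?case
  proof (cases "y \<in> C")
    case True
    then show ?thesis using u_in by (simp add: avoid_within_in)
  next
    case False
    have "u y \<le> 1 + (\<Sum>z\<in>UNIV. P y z * u z)"
      using False by (rule u_sub)
    also have "\<dots> \<le> 1 + (\<Sum>z\<in>UNIV. P y z * ((\<Sum>t<n. avoid_within P C t z) + G * avoid_within P C n z))"
      using stochastic by (intro add_left_mono sum_mono mult_left_mono Suc) (simp add: stochastic_def)
    also have "\<dots> = (\<Sum>t<Suc n. avoid_within P C t y) + G * avoid_within P C (Suc n) y"
      using False
      by (simp add: sum.lessThan_Suc_shift distrib_left sum.distrib sum_distrib_left
          sum.swap[of _ "{..<n}" UNIV] mult.left_commute del: sum.lessThan_Suc)
    finally show ?thesis .
  qed
qed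

lemma hit_before_le_sum_avoid_within:
  assumes stochastic: "stochastic P" and x_notin: "x \<notin> C" and "0 \<le> G"
    and escape: "G * (1 - (\<Sum>z\<in>UNIV. P x z * hit_before P x C z)) \<le> 1"
  shows "G * hit_before P x C y \<le> (\<Sum>t<n. avoid_within P C t y) + G * avoid_within P C n y"
proof (rule le_sum_avoid_within[OF stochastic])
  fix y
  show "G * hit_before P x C y \<le> G"
    using \<open>0 \<le> G\<close> hit_before_le_1[OF stochastic x_notin] by (simp add: mult_left_le)
  show "y \<in> C \<Longrightarrow> G * hit_before P x C y \<le> 0"
    using hit_before_in[OF stochastic x_notin] by simp
  assume "y \<notin> C"
  show "G * hit_before P x C y \<le> 1 + (\<Sum>z\<in>UNIV. P y z * (G * hit_before P x C z))"
  proof (cases "y = x")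
    case True
    then show ?thesis
      using escape hit_before_self[OF stochastic x_notin]
      by (simp add: sum_distrib_left algebra_simps)
  next
    case False
    then show ?thesis
      using hit_before_harmonic[OF stochastic x_notin False \<open>y \<notin> C\<close>]
      by (simp add: sum_distrib_left mult.left_commute)
  qed
qed

lemma ennreal_le_of_partial_sums:
  fixes s :: "nat \<Rightarrow> real"
  assumes s_nonneg: "\<And>n. 0 \<le> s n" and a_le: "\<And>n. a \<le> (\<Sum>t<n. s t) + G * s n"
    and bounded: "\<And>n. ennreal (\<Sum>t<n. s t) \<le> I"
  shows "ennreal a \<le> I"
proof (cases I)
  case (real r)
  then have partial_le: "(\<Sum>t<n. s t) \<le> r" for n
    using bounded[of n] by (simp add: ennreal_le_iff)
  have "summable s"
  proof (rule bounded_imp_summable[OF s_nonneg])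
    show "(\<Sum>k\<le>n. s k) \<le> r" for n
      using partial_le[of "Suc n"] by (simp only: lessThan_Suc_atMost)
  qed
  then have "(\<lambda>n. r + G * s n) \<longlonglongrightarrow> r"
    using tendsto_add[OF tendsto_const tendsto_mult_right_zero[OF summable_LIMSEQ_zero]] by simp
  moreover have "a \<le> r + G * s n" for n
    using a_le[of n] partial_le[of n] by linarith
  ultimately have "a \<le> r"
    by (intro LIMSEQ_le_const) auto
  then show ?thesis
    using real by (simp add: ennreal_leI)
qed simp

lemma finite_trajectories_filter: "finite {xs\<in>trajectories n (y::'a::finite). Q xs}"
  by (rule finite_subset[OF _ finite_trajectories]) auto

definition initial_segment :: "(nat \<Rightarrow> 'w \<Rightarrow> 'a) \<Rightarrow> nat \<Rightarrow> 'w \<Rightarrow> 'a list" where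
  "initial_segment X n \<omega> = map (\<lambda>i. X i \<omega>) [0..<Suc n]"

lemma initial_segment_nth: "i \<le> n \<Longrightarrow> initial_segment X n \<omega> ! i = X i \<omega>"
  unfolding initial_segment_def by (simp add: nth_upt del: upt_Suc)

lemma length_initial_segment [simp]: "length (initial_segment X n \<omega>) = Suc n"
  by (simp add: initial_segment_def)

lemma set_initial_segment: "set (initial_segment X n \<omega>) = (\<lambda>i. X i \<omega>) ` {..n}"
  by (auto simp: initial_segment_def atLeast0LessThan lessThan_Suc_atMost simp del: upt_Suc)

lemma initial_segment_eq_iff:
  "initial_segment X n \<omega> = xs \<longleftrightarrow> length xs = Suc n \<and> (\<forall>i\<le>n. X i \<omega> = xs ! i)"
  by (auto simp: initial_segment_def list_eq_iff_nth_eq simp del: upt_Suc)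

lemma initial_segment_in_trajectories:
  "initial_segment X n \<omega> \<in> trajectories n y \<longleftrightarrow> X 0 \<omega> = y"
  unfolding trajectories_def initial_segment_def by (simp add: upt_conv_Cons del: upt_Suc)

lemma reaches_before_initial_segment:
  "reaches_before x C (initial_segment X n \<omega>) \<longleftrightarrow> (\<exists>k\<le>n. X k \<omega> = x \<and> (\<forall>i\<le>k. X i \<omega> \<notin> C))"
proof -
  have "(\<forall>i\<le>k. initial_segment X n \<omega> ! i \<notin> C) \<longleftrightarrow> (\<forall>i\<le>k. X i \<omega> \<notin> C)" if "k \<le> n" for k
    using that by (auto simp: initial_segment_nth)
  then show ?thesis
    unfolding reaches_before_iff_nth by (auto simp: initial_segment_nth less_Suc_eq_le)
qed

lemma avoids_initial_segment:
  "set (initial_segment X n \<omega>) \<inter> C = {} \<longleftrightarrow> (\<forall>i\<le>n. X i \<omega> \<notin> C)"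
  by (auto simp: set_initial_segment)

context
  fixes M :: "'w measure" and X :: "nat \<Rightarrow> 'w \<Rightarrow> 'a::finite" and P :: "'a \<Rightarrow> 'a \<Rightarrow> real"
  assumes markov: "markov_chain M X P"
begin

interpretation prob_space M
  using markov by (simp add: markov_chain_def)

lemma initial_segment_fiber_sets: "{\<omega>\<in>space M. initial_segment X n \<omega> = xs} \<in> sets M"
proof -
  have [measurable]: "\<And>i. X i \<in> measurable M (count_space UNIV)"
    using markov by (simp add: markov_chain_def)
  show ?thesis unfolding initial_segment_eq_iff by measurable
qed

lemma measure_initial_segment_fiber:
  assumes "xs \<in> trajectories n x0"
  shows "measure M {\<omega>\<in>space M. initial_segment X n \<omega> = xs}
    = measure M {\<omega>\<in>space M. X 0 \<omega> = x0} * path_weight P xs"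
proof -
  have len: "length xs = Suc n" and "hd xs = x0"
    using assms by (auto simp: trajectories_def)
  then have hd: "xs ! 0 = x0"
    by (metis hd_conv_nth list.size(3) nat.distinct(1))
  have "measure M {\<omega>\<in>space M. \<forall>i\<le>n. X i \<omega> = xs ! i}
      = measure M {\<omega>\<in>space M. X 0 \<omega> = xs ! 0} * (\<Prod>i<n. P (xs ! i) (xs ! Suc i))"
    using markov unfolding markov_chain_def by blast
  then show ?thesis
    using len hd by (simp add: initial_segment_eq_iff path_weight_eq_prod)
qed

lemma initial_segment_event_eq_Union:
  "{\<omega>\<in>space M. X 0 \<omega> = x0 \<and> Q (initial_segment X n \<omega>)}
    = (\<Union>xs\<in>{xs\<in>trajectories n x0. Q xs}. {\<omega>\<in>space M. initial_segment X n \<omega> = xs})"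
  by (auto simp: initial_segment_in_trajectories)

lemma initial_segment_event_sets:
  "{\<omega>\<in>space M. X 0 \<omega> = x0 \<and> Q (initial_segment X n \<omega>)} \<in> sets M"
  unfolding initial_segment_event_eq_Union
  by (intro sets.finite_UN finite_trajectories_filter initial_segment_fiber_sets)

lemma measure_initial_segment_event:
  "measure M {\<omega>\<in>space M. X 0 \<omega> = x0 \<and> Q (initial_segment X n \<omega>)}
    = measure M {\<omega>\<in>space M. X 0 \<omega> = x0} * trajectory_prob P n x0 Q"
proof -
  let ?S = "{xs\<in>trajectories n x0. Q xs}"
  have "measure M (\<Union>xs\<in>?S. {\<omega>\<in>space M. initial_segment X n \<omega> = xs})
      = (\<Sum>xs\<in>?S. measure M {\<omega>\<in>space M. initial_segment X n \<omega> = xs})"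
    using finite_trajectories_filter initial_segment_fiber_sets
    by (intro finite_measure_finite_Union) (auto simp: disjoint_family_on_def)
  also have "\<dots> = (\<Sum>xs\<in>?S. measure M {\<omega>\<in>space M. X 0 \<omega> = x0} * path_weight P xs)"
    by (intro sum.cong refl) (simp add: measure_initial_segment_fiber)
  also have "\<dots> = measure M {\<omega>\<in>space M. X 0 \<omega> = x0} * trajectory_prob P n x0 Q"
    unfolding trajectory_prob_def sum_distrib_left sum.inter_filter[OF finite_trajectories, symmetric]
    by (intro sum.cong) simp_all
  finally show ?thesis
    unfolding initial_segment_event_eq_Union .
qed

end

lemma hit_le: "X k \<omega> \<in> A \<Longrightarrow> hit X A \<omega> \<le> enat k"
  unfolding hit_def by (auto intro: Least_le)

lemma hit_eq_enatD: "hit X A \<omega> = enat k \<Longrightarrow> X k \<omega> \<in> A"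
  unfolding hit_def by (auto split: if_splits intro: LeastI_ex)

lemma enat_less_hit_iff: "enat t < hit X A \<omega> \<longleftrightarrow> (\<forall>i\<le>t. X i \<omega> \<notin> A)"
proof
  assume "enat t < hit X A \<omega>"
  then show "\<forall>i\<le>t. X i \<omega> \<notin> A"
    using hit_le[of X _ \<omega> A] by (meson enat_ord_simps(1) le_less_trans linorder_not_le)
next
  assume avoid: "\<forall>i\<le>t. X i \<omega> \<notin> A"
  show "enat t < hit X A \<omega>"
  proof (cases "hit X A \<omega>")
    case (enat k)
    then have "t < k"
      using hit_eq_enatD[OF enat] avoid by (meson not_le)
    then show ?thesis using enat by simp
  qed simp
qed

lemma hit_less_hitD:
  assumes "hit X {x} \<omega> < hit X C \<omega>"
  obtains k where "X k \<omega> = x" "\<forall>i\<le>k. X i \<omega> \<notin> C"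
proof -
  obtain k where k: "hit X {x} \<omega> = enat k"
    using assms by (cases "hit X {x} \<omega>") auto
  then show ?thesis
    using that hit_eq_enatD[OF k] assms enat_less_hit_iff[of k X C \<omega>] by simp
qed

lemma sum_indicator_less_le_enat:
  "(\<Sum>t<n. if enat t < H then 1 else 0 :: ennreal) \<le> ennreal_of_enat H"
proof (cases H)
  case (enat k)
  have "(\<Sum>t<n. if enat t < enat k then 1 else 0 :: ennreal) = of_nat (min n k)"
    by (induction n) (auto simp: min_def)
  then show ?thesis using enat by simp
qed simp

context
  fixes M :: "'w measure" and X :: "nat \<Rightarrow> 'w \<Rightarrow> 'a::finite" and P :: "'a \<Rightarrow> 'a \<Rightarrow> real"
    and x0 :: 'a
  assumes markov: "markov_chain M X P" and stochastic: "stochastic P"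
    and start_pos: "measure M {\<omega>\<in>space M. X 0 \<omega> = x0} > 0"
begin

interpretation prob_space M
  using markov by (simp add: markov_chain_def)

lemma cond_prob_hit_first_le_hit_before:
  assumes x_notin: "x \<notin> C"
  shows "cond_prob_start M X x0 {\<omega>\<in>space M. hit X {x} \<omega> < hit X C \<omega>} \<le> hit_before P x C x0"
proof -
  define m0 where "m0 = measure M {\<omega>\<in>space M. X 0 \<omega> = x0}"
  define V where "V n = {\<omega>\<in>space M. X 0 \<omega> = x0 \<and> reaches_before x C (initial_segment X n \<omega>)}" for n
  have V_sets: "range V \<subseteq> sets M"
    unfolding V_def using initial_segment_event_sets[OF markov] by blast
  have "incseq V"
    by (rule incseq_SucI) (auto simp: V_def reaches_before_initial_segment le_Suc_eq)
  then have lim: "(\<lambda>n. measure M (V n)) \<longlonglongrightarrow> measure M (\<Union>n. V n)"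
    using V_sets by (rule finite_Lim_measure_incseq[rotated])
  have "measure M (V n) = m0 * hit_before_within P x C n x0" for n
    unfolding V_def m0_def measure_initial_segment_event[OF markov]
    by (simp add: hit_before_within_eq_trajectory_prob[OF stochastic x_notin])
  then have "measure M (V n) \<le> m0 * hit_before P x C x0" for n
    using start_pos hit_before_within_le[OF stochastic x_notin] by (simp add: m0_def)
  then have "measure M (\<Union>n. V n) \<le> m0 * hit_before P x C x0"
    by (intro LIMSEQ_le_const2[OF lim]) simp
  moreover have "{\<omega>\<in>space M. hit X {x} \<omega> < hit X C \<omega>} \<inter> {\<omega>\<in>space M. X 0 \<omega> = x0} \<subseteq> (\<Union>n. V n)"
    by (auto simp: V_def reaches_before_initial_segment elim!: hit_less_hitD)
  ultimately have "measure M ({\<omega>\<in>space M. hit X {x} \<omega> < hit X C \<omega>} \<inter> {\<omega>\<in>space M. X 0 \<omega> = x0})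
      \<le> m0 * hit_before P x C x0"
    using V_sets by (meson finite_measure_mono order_trans sets.countable_UN)
  then show ?thesis
    using start_pos by (simp add: cond_prob_start_def m0_def divide_le_eq mult.commute)
qed

lemma sum_avoid_within_le_cond_exp_hit:
  "ennreal (\<Sum>t<n. avoid_within P C t x0) \<le> cond_exp_start M X x0 (\<lambda>\<omega>. ennreal_of_enat (hit X C \<omega>))"
proof -
  define m0 where "m0 = measure M {\<omega>\<in>space M. X 0 \<omega> = x0}"
  define T where "T t = {\<omega>\<in>space M. X 0 \<omega> = x0 \<and> set (initial_segment X t \<omega>) \<inter> C = {}}" for t
  have T_sets: "T t \<in> sets M" for t
    unfolding T_def by (rule initial_segment_event_sets[OF markov])
  have "measure M (T t) = m0 * avoid_within P C t x0" for t
    using measure_initial_segment_event[OF markov, of x0 "\<lambda>xs. set xs \<inter> C = {}" t]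
    by (simp add: T_def m0_def avoid_within_eq_trajectory_prob)
  then have "ennreal (\<Sum>t<n. avoid_within P C t x0) * ennreal m0 = (\<Sum>t<n. emeasure M (T t))"
    using start_pos avoid_within_nonneg[OF stochastic]
    by (simp add: m0_def emeasure_eq_measure sum_distrib_right sum_nonneg mult.commute flip: ennreal_mult)
  also have "\<dots> = (\<integral>\<^sup>+\<omega>. (\<Sum>t<n. indicator (T t) \<omega>) \<partial>M)"
    using T_sets by (simp add: nn_integral_sum)
  also have "\<dots> \<le> (\<integral>\<^sup>+\<omega>. ennreal_of_enat (hit X C \<omega>) * indicator {\<omega>\<in>space M. X 0 \<omega> = x0} \<omega> \<partial>M)"
  proof (intro nn_integral_mono)
    fix \<omega> assume "\<omega> \<in> space M"
    then have "indicator (T t) \<omega> = (if enat t < hit X C \<omega> then 1 else 0 :: ennreal)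
        * indicator {\<omega>\<in>space M. X 0 \<omega> = x0} \<omega>" for t
      by (simp add: T_def avoids_initial_segment enat_less_hit_iff indicator_def)
    then have "(\<Sum>t<n. indicator (T t) \<omega>) = (\<Sum>t<n. if enat t < hit X C \<omega> then 1 else 0 :: ennreal)
        * indicator {\<omega>\<in>space M. X 0 \<omega> = x0} \<omega>"
      by (simp only: sum_distrib_right)
    then show "(\<Sum>t<n. indicator (T t) \<omega>)
        \<le> ennreal_of_enat (hit X C \<omega>) * indicator {\<omega>\<in>space M. X 0 \<omega> = x0} \<omega>"
      using mult_right_mono[OF sum_indicator_less_le_enat] by simp
  qed
  also have "\<dots> = cond_exp_start M X x0 (\<lambda>\<omega>. ennreal_of_enat (hit X C \<omega>)) * ennreal m0"
    using start_pos unfolding cond_exp_start_def m0_def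
    by (simp add: emeasure_eq_measure mult_divide_eq_ennreal ennreal_divide_times)
  finally show ?thesis
    using start_pos ennreal_mult_le_mult_iff[of "ennreal m0"] by (simp add: m0_def mult.commute)
qed

end

lemma cond_prob_hit_first_in:
  "x \<in> C \<Longrightarrow> cond_prob_start M X x0 {\<omega>\<in>space M. hit X {x} \<omega> < hit X C \<omega>} = 0"
proof -
  assume "x \<in> C"
  then have no_visit: "{\<omega>\<in>space M. hit X {x} \<omega> < hit X C \<omega>} = {}"
    by (auto elim: hit_less_hitD)
  show ?thesis
    unfolding cond_prob_start_def no_visit by simp
qed

lemma cond_exp_hit_ge_hit_before:
  fixes \<pi> :: "'a::finite \<Rightarrow> real"
  assumes markov: "markov_chain M X P" and stochastic: "stochastic P"
    and stationary: "stationary_dist P \<pi>"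
    and start_pos: "measure M {\<omega>\<in>space M. X 0 \<omega> = x0} > 0"
    and paths: "\<forall>xs. is_path P xs \<and> hd xs = x \<and> last xs \<in> C \<longrightarrow> set xs \<inter> B \<noteq> {}"
    and x_notin: "x \<notin> C" and mass_B: "0 < (\<Sum>y\<in>B. \<pi> y)"
  shows "ennreal (hit_before P x C x0 * \<pi> x / (\<Sum>y\<in>B. \<pi> y))
    \<le> cond_exp_start M X x0 (\<lambda>\<omega>. ennreal_of_enat (hit X C \<omega>))"
proof -
  define G where "G = \<pi> x / (\<Sum>y\<in>B. \<pi> y)"
  have "0 \<le> G"
    using mass_B stationary by (simp add: G_def stationary_dist_def)
  have "\<pi> x * (1 - (\<Sum>z\<in>UNIV. P x z * hit_before P x C z)) \<le> (\<Sum>y\<in>B. \<pi> y)"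
    by (intro stationary_escape_bound[OF stochastic stationary paths] hit_before_self
        hit_before_nonneg hit_before_le_1 hit_before_harmonic stochastic x_notin)
  then have escape: "G * (1 - (\<Sum>z\<in>UNIV. P x z * hit_before P x C z)) \<le> 1"
    using mass_B by (simp add: G_def divide_simps)
  have "ennreal (G * hit_before P x C x0) \<le> cond_exp_start M X x0 (\<lambda>\<omega>. ennreal_of_enat (hit X C \<omega>))"
  proof (rule ennreal_le_of_partial_sums)
    show "0 \<le> avoid_within P C n x0" for n
      by (rule avoid_within_nonneg[OF stochastic])
    show "G * hit_before P x C x0 \<le> (\<Sum>t<n. avoid_within P C t x0) + G * avoid_within P C n x0" for n
      using escape by (rule hit_before_le_sum_avoid_within[OF stochastic x_notin \<open>0 \<le> G\<close>])
    show "ennreal (\<Sum>t<n. avoid_within P C t x0)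
        \<le> cond_exp_start M X x0 (\<lambda>\<omega>. ennreal_of_enat (hit X C \<omega>))" for n
      by (rule sum_avoid_within_le_cond_exp_hit[OF markov stochastic start_pos])
  qed
  then show ?thesis
    by (simp add: G_def mult.commute)
qed

theorem propositionI1:
  fixes M :: "'w measure" and X :: "nat \<Rightarrow> 'w \<Rightarrow> 'a::finite"
    and P :: "'a \<Rightarrow> 'a \<Rightarrow> real" and \<pi> :: "'a \<Rightarrow> real"
    and x x0 :: 'a and C B :: "'a set" and c :: real
  assumes "markov_chain M X P" and "stochastic P"
    and "irreducible_chain P" and "aperiodic_chain P"
    and "stationary_dist P \<pi>"
    and "measure M {\<omega>\<in>space M. X 0 \<omega> = x0} > 0"
    and "cond_prob_start M X x0 {\<omega>\<in>space M. hit X {x} \<omega> < hit X C \<omega>} \<ge> c"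
    and "\<forall>xs. is_path P xs \<and> hd xs = x \<and> last xs \<in> C \<longrightarrow> set xs \<inter> B \<noteq> {}"
  shows "cond_exp_start M X x0 (\<lambda>\<omega>. ennreal_of_enat (hit X C \<omega>))
           \<ge> ennreal (c * \<pi> x / (\<Sum>y\<in>B. \<pi> y))"
proof (cases "c * \<pi> x / (\<Sum>y\<in>B. \<pi> y) \<le> 0")
  case False
  have \<pi>_nonneg: "0 \<le> \<pi> y" for y
    using assms(5) by (simp add: stationary_dist_def)
  have pos: "0 < c * \<pi> x / (\<Sum>y\<in>B. \<pi> y)"
    using False by simp
  then have mass_B: "0 < (\<Sum>y\<in>B. \<pi> y)"
    using sum_nonneg[of B \<pi>] \<pi>_nonneg by (auto simp: zero_less_divide_iff)
  with pos \<pi>_nonneg[of x] have "0 < c"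
    by (auto simp: zero_less_divide_iff zero_less_mult_iff)
  have x_notin: "x \<notin> C"
  proof
    assume "x \<in> C"
    with assms(7) have "c \<le> 0"
      by (simp add: cond_prob_hit_first_in)
    with \<open>0 < c\<close> show False by simp
  qed
  have "c \<le> hit_before P x C x0"
    using assms(7) cond_prob_hit_first_le_hit_before[OF assms(1,2,6) x_notin] by simp
  then have "c * \<pi> x / (\<Sum>y\<in>B. \<pi> y) \<le> hit_before P x C x0 * \<pi> x / (\<Sum>y\<in>B. \<pi> y)"
    using mass_B \<pi>_nonneg[of x] by (intro divide_right_mono mult_right_mono) auto
  then show ?thesis
    using cond_exp_hit_ge_hit_before[OF assms(1,2,5,6,8) x_notin mass_B] by (rule order_trans[OF ennreal_leI])
qed (simp add: ennreal_neg)

end
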